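(* Let $n\geq 4$. Then $d_{\Gamma_n}=2J-A_{\Gamma_n}$, where $A_{\Gamma_n}$ is the adjacency matrix of $\Gamma_n$ and $J$ is the $n!\times n!$ matrix with zero diagonal and all off-diagonal entries equal to $1$. Consequently, if $\eta_1=D_n,\eta_2,\dots,\eta_{n!}$ is the adjacency spectrum of $\Gamma_n$ (with $\eta_1=D_n$ the eigenvalue of the all-ones eigenvector), then the distance spectrum of $\Gamma_n$ is \[\{2(n!-1)-\eta_1,\,-2-\eta_2,\,\dots,\,-2-\eta_{n!}\}.\] In representation-theoretic terms, $\gamma_{(n)}=2(n!-1)-D_n$ and $\gamma_\lambda=-2-\eta_\lambda$ for every partition $\lambda\vdash n$ with $\lambda\neq(n)$.
   Context: $\mathfrak{S}_n$ is the symmetric group, $D_n$ denotes both the set of derangements in $\mathfrak{S}_n$ and its cardinality. The derangement graph $\Gamma_n$ has vertex set $\mathfrak{S}_n$, with $w$ adjacent to $sw$ for $s\in D_n$; $d_{\Gamma_n}$ is its distance matrix. Irreducible characters of $\mathfrak{S}_n$ are indexed by partitions $\lambda\vdash n$, denoted $\chi_\lambda$, with $f_\lambda=\chi_\lambda(1)$; $(n)$ is the trivial character. Define $\eta_\lambda=\frac{1}{f_\lambda}\sum_{w\in D_n}\chi_\lambda(w)$ (the eigenvalue of $A_{\Gamma_n}$ on the $\lambda$-isotypic component, of multiplicity $f_\lambda^2$), and $\gamma_\lambda=\frac{1}{f_\lambda}\sum_{w\neq 1}\ell_D(w)\chi_\lambda(w)$, where $\ell_D(w)$ is the minimal number of derangements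 whose product is $w$. *)

theory Defs
  imports "HOL-Combinatorics.Permutations" "HOL-Library.FuncSet"
          "Jordan_Normal_Form.Char_Poly"
begin

(* S_n: permutations of {0..<n} (the paper's {1..n}, shifted) *)
definition Sym :: "nat \<Rightarrow> (nat \<Rightarrow> nat) set" where
  "Sym n = {p. p permutes {..<n}}"

definition Der :: "nat \<Rightarrow> (nat \<Rightarrow> nat) set" where
  "Der n = {p \<in> Sym n. \<forall>i<n. p i \<noteq> i}"

(* adjacency in Gamma_n: w ~ s w for s in D_n, i.e. v \<circ> Hilbert_Choice.inv w \<in> D_n *)
definition adj :: "nat \<Rightarrow> (nat \<Rightarrow> nat) \<Rightarrow> (nat \<Rightarrow> nat) \<Rightarrow> bool" where
  "adj n w v \<longleftrightarrow> w \<in> Sym n \<and> v \<in> Sym n \<and> v \<circ> Hilbert_Choice.inv w \<in> Der n"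

definition has_walk :: "nat \<Rightarrow> (nat \<Rightarrow> nat) \<Rightarrow> (nat \<Rightarrow> nat) \<Rightarrow> nat \<Rightarrow> bool" where
  "has_walk n u v k \<longleftrightarrow> (\<exists>xs. length xs = Suc k \<and> hd xs = u \<and> last xs = v \<and>
      (\<forall>i<k. adj n (xs ! i) (xs ! Suc i)))"

definition gdist :: "nat \<Rightarrow> (nat \<Rightarrow> nat) \<Rightarrow> (nat \<Rightarrow> nat) \<Rightarrow> nat" where
  "gdist n u v = (LEAST k. has_walk n u v k)"

definition lenD :: "nat \<Rightarrow> (nat \<Rightarrow> nat) \<Rightarrow> nat" where
  "lenD n w = (LEAST k. \<exists>ss. length ss = k \<and> set ss \<subseteq> Der n \<and> foldr (\<circ>) ss id = w)"

section \<open>Irreducible characters of S_n (Jacobi--Trudi / determinantal formula)\<close>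

definition is_partition :: "nat \<Rightarrow> nat list \<Rightarrow> bool" where
  "is_partition n lam \<longleftrightarrow> sorted (rev lam) \<and> (\<forall>x\<in>set lam. 0 < x) \<and> sum_list lam = n"

(* permutation character of the Young subgroup S_mu (mu a composition of n,
   possibly with zero parts); 0 if some part is negative *)
definition young_char :: "nat \<Rightarrow> int list \<Rightarrow> (nat \<Rightarrow> nat) \<Rightarrow> int" where
  "young_char n mu w = (if (\<exists>x\<in>set mu. x < 0) then 0 else
     int (card {f \<in> {..<n} \<rightarrow>\<^sub>E {..<length mu}.
                 (\<forall>i<length mu. int (card {j. j < n \<and> f j = i}) = mu ! i) \<and>
                 (\<forall>j<n. f (w j) = f j)}))"

definition chi :: "nat \<Rightarrow> nat list \<Rightarrow> (nat \<Rightarrow> nat) \<Rightarrow> int" where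
  "chi n lam w = (\<Sum>\<sigma> | \<sigma> permutes {..<length lam}.
      sign \<sigma> * young_char n (map (\<lambda>i. int (lam ! i) - int i + int (\<sigma> i)) [0..<length lam]) w)"

definition fdeg :: "nat \<Rightarrow> nat list \<Rightarrow> int" where
  "fdeg n lam = chi n lam id"

definition eta :: "nat \<Rightarrow> nat list \<Rightarrow> real" where
  "eta n lam = (\<Sum>w\<in>Der n. real_of_int (chi n lam w)) / real_of_int (fdeg n lam)"

definition gamma :: "nat \<Rightarrow> nat list \<Rightarrow> real" where
  "gamma n lam = (\<Sum>w\<in>Sym n - {id}. real (lenD n w) * real_of_int (chi n lam w)) / real_of_int (fdeg n lam)"

definition adj_mat :: "nat \<Rightarrow> (nat \<Rightarrow> nat \<Rightarrow> nat) \<Rightarrow> real mat" where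
  "adj_mat n e = mat (fact n) (fact n) (\<lambda>(i,j). if adj n (e i) (e j) then 1 else 0)"

definition dist_mat :: "nat \<Rightarrow> (nat \<Rightarrow> nat \<Rightarrow> nat) \<Rightarrow> real mat" where
  "dist_mat n e = mat (fact n) (fact n) (\<lambda>(i,j). real (gdist n (e i) (e j)))"

end

theory Submission
  imports Defs
begin

text \<open>For \<open>n \<ge> 4\<close> every permutation \<open>p\<close> is avoided pointwise by some derangement \<open>s\<close>
  (\<open>s i \<noteq> i\<close> and \<open>s i \<noteq> p i\<close>): check \<open>n = 4\<close> by hand and insert one point at a time. Then
  \<open>p = (p s\<^sup>-\<^sup>1) s\<close> is a product of two derangements, so \<open>\<Gamma>\<^sub>n\<close> has diameter two, which
  gives \<open>d = 2J - A\<close> and \<open>\<ell>\<^sub>D(w) = 2\<close> for every \<open>w \<noteq> 1\<close> that is not a derangement.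
  Since \<open>A\<close> has constant row sums \<open>D\<^sub>n\<close>, the all-ones vector is a common eigenvector of
  \<open>A\<close> and \<open>J\<close>, and on the quotient by it \<open>2J - A\<close> acts as \<open>-2 - A\<close>.
  For the characters, \<open>f\<^sub>\<lambda> \<gamma>\<^sub>\<lambda> = 2 \<Sum>\<^sub>w \<chi>\<^sub>\<lambda>(w) - f\<^sub>\<lambda> \<eta>\<^sub>\<lambda> - 2 f\<^sub>\<lambda>\<close>, and
  \<open>\<Sum>\<^sub>w \<chi>\<^sub>\<lambda>(w) = 0\<close> for \<open>\<lambda> \<noteq> (n)\<close>: in the Jacobi--Trudi expansion of \<open>\<chi>\<^sub>\<lambda>\<close> into
  Young permutation characters each term sums to \<open>n!\<close> or \<open>0\<close> (Burnside), and the signed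
  terms cancel in pairs.\<close>

section \<open>Every permutation is a product of two derangements\<close>

lemma Der_subset_Sym: "Der n \<subseteq> Sym n"
  by (auto simp: Der_def)

lemma finite_Sym [simp]: "finite (Sym n)"
  unfolding Sym_def by (rule finite_permutations) simp

lemma card_Sym: "card (Sym n) = fact n"
  unfolding Sym_def by (rule card_permutations) simp_all

lemma id_in_Sym: "id \<in> Sym n"
  by (simp add: Sym_def)

lemma id_notin_Der: "n \<ge> 1 \<Longrightarrow> id \<notin> Der n"
  unfolding Der_def by (auto intro!: exI[of _ 0])

definition derangements4 :: "(nat \<Rightarrow> nat) list" where
  "derangements4 =
     [transpose 0 1 \<circ> transpose 2 3, transpose 0 2 \<circ> transpose 1 3, transpose 0 3 \<circ> transpose 1 2,
      transpose 0 1 \<circ> transpose 1 2 \<circ> transpose 2 3, transpose 0 1 \<circ> transpose 1 3 \<circ> transpose 3 2,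
      transpose 0 2 \<circ> transpose 2 1 \<circ> transpose 1 3, transpose 0 2 \<circ> transpose 2 3 \<circ> transpose 3 1,
      transpose 0 3 \<circ> transpose 3 1 \<circ> transpose 1 2, transpose 0 3 \<circ> transpose 3 2 \<circ> transpose 2 1]"

lemma derangements4_permutes: "s \<in> set derangements4 \<Longrightarrow> s permutes {..<4}"
  unfolding derangements4_def by (auto intro!: permutes_compose permutes_swap_id)

lemma derangements4_no_fixpoint: "s \<in> set derangements4 \<Longrightarrow> i < 4 \<Longrightarrow> s i \<noteq> i"
  unfolding derangements4_def by (auto simp: less_Suc_eq numeral_eq_Suc transpose_def)

lemma derangements4_avoid:
  "(a::nat) < 4 \<Longrightarrow> b < 4 \<Longrightarrow> c < 4 \<Longrightarrow> d < 4 \<Longrightarrow> distinct [a, b, c, d] \<Longrightarrow>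
   \<exists>s\<in>set derangements4. s 0 \<noteq> a \<and> s 1 \<noteq> b \<and> s 2 \<noteq> c \<and> s 3 \<noteq> d"
  unfolding derangements4_def by (auto simp: less_Suc_eq numeral_eq_Suc transpose_def)

lemma exists_derangement_avoiding_4:
  assumes p: "p permutes {..<4::nat}"
  shows "\<exists>s. s permutes {..<4} \<and> (\<forall>i<4. s i \<noteq> i \<and> s i \<noteq> p i)"
proof -
  have "p i < 4" if "i < 4" for i using permutes_in_image[OF p, of i] that by simp
  then have p_lt: "p 0 < 4" "p 1 < 4" "p 2 < 4" "p 3 < 4" by simp_all
  have p_inj: "\<And>i j. p i = p j \<Longrightarrow> i = j" using p by (meson permutes_inj injD)
  have "distinct [p 0, p 1, p 2, p 3]" using p_inj by (auto dest: p_inj)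
  then obtain s where s: "s \<in> set derangements4" "s 0 \<noteq> p 0" "s 1 \<noteq> p 1" "s 2 \<noteq> p 2" "s 3 \<noteq> p 3"
    using derangements4_avoid[OF p_lt] by auto
  have "s i \<noteq> i \<and> s i \<noteq> p i" if "i < 4" for i
  proof -
    from that have "i = 0 \<or> i = 1 \<or> i = 2 \<or> i = 3" by auto
    then show ?thesis using s derangements4_no_fixpoint[OF s(1) that] by auto
  qed
  then show ?thesis using derangements4_permutes[OF s(1)] by blast
qed

lemma exists_derangement_avoiding_Suc:
  assumes n: "n \<ge> 3" and p: "p permutes {..<Suc n}" and s': "s' permutes {..<n}"
    and s'_avoids: "\<And>i. i < n \<Longrightarrow> s' i \<noteq> i \<and> s' i \<noteq> (transpose n (p n) \<circ> p) i"
  shows "\<exists>s. s permutes {..<Suc n} \<and> (\<forall>i<Suc n. s i \<noteq> i \<and> s i \<noteq> p i)"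
proof -
  have "\<exists>j\<in>{0, 1, 2}. j \<noteq> Hilbert_Choice.inv p n \<and> j \<noteq> Hilbert_Choice.inv s' (p n)"
    by auto
  then obtain j where "j \<in> {0, 1, 2}" "j \<noteq> Hilbert_Choice.inv p n" "j \<noteq> Hilbert_Choice.inv s' (p n)"
    by blast
  then have j: "j < n" "j \<noteq> Hilbert_Choice.inv p n" "j \<noteq> Hilbert_Choice.inv s' (p n)"
    using n by auto
  have pj: "p j \<noteq> n" using j p by (metis permutes_inverses(2))
  have s'j: "s' j \<noteq> p n" using j s' by (metis permutes_inverses(2))
  have s'j_lt: "s' j < n" using s' j(1) by (metis lessThan_iff permutes_in_image)
  have s'_n: "s' n = n" using s' by (simp add: permutes_not_in)
  \<comment> \<open>redirect \<open>j\<close> to \<open>n\<close> and send \<open>n\<close> to \<open>s' j\<close>\<close>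
  define s where "s = transpose n (s' j) \<circ> s'"
  have "s permutes {..<Suc n}"
    unfolding s_def using s'j_lt
    by (intro permutes_compose[OF permutes_subset[OF s']] permutes_swap_id) auto
  moreover have "s i \<noteq> i \<and> s i \<noteq> p i" if i: "i < Suc n" for i
  proof (cases "i = n \<or> i = j")
    case True
    then show ?thesis using s'_n s'j_lt s'j pj j(1) by (auto simp: s_def)
  next
    case False
    then have i_lt: "i < n" using i by auto
    have "s' i \<noteq> s' j" using False s' by (metis permutes_inj injD)
    moreover have "s' i \<noteq> n" using s' i_lt by (metis lessThan_iff permutes_in_image less_irrefl)
    ultimately have si: "s i = s' i" by (simp add: s_def transpose_def)
    have "p i \<noteq> p n" using False p by (metis permutes_inj injD)
    then have "p i = n \<or> (transpose n (p n) \<circ> p) i = p i" by (auto simp: transpose_def)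
    then show ?thesis using si s'_avoids[OF i_lt] \<open>s' i \<noteq> n\<close> by auto
  qed
  ultimately show ?thesis by blast
qed

lemma exists_derangement_avoiding:
  "(n::nat) \<ge> 4 \<Longrightarrow> p permutes {..<n} \<Longrightarrow> \<exists>s. s permutes {..<n} \<and> (\<forall>i<n. s i \<noteq> i \<and> s i \<noteq> p i)"
proof (induction n arbitrary: p rule: nat_induct_at_least)
  case base
  then show ?case using exists_derangement_avoiding_4 by simp
next
  case (Suc n)
  have "transpose n (p n) \<circ> p permutes {..<n}"
    using permutes_insert_lemma[of p n "{..<n}"] Suc.prems by (simp add: lessThan_Suc)
  then obtain s' where
    "s' permutes {..<n}" "\<And>i. i < n \<Longrightarrow> s' i \<noteq> i \<and> s' i \<noteq> (transpose n (p n) \<circ> p) i"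
    using Suc.IH by blast
  then show ?case using exists_derangement_avoiding_Suc Suc.hyps Suc.prems by simp
qed

lemma Sym_product_of_two_Der:
  assumes "n \<ge> 4" "p \<in> Sym n"
  shows "\<exists>t1 t2. t1 \<in> Der n \<and> t2 \<in> Der n \<and> p = t2 \<circ> t1"
proof -
  have p: "p permutes {..<n}" using assms by (simp add: Sym_def)
  obtain s where s: "s permutes {..<n}" "\<And>i. i < n \<Longrightarrow> s i \<noteq> i \<and> s i \<noteq> p i"
    using exists_derangement_avoiding[OF assms(1) p] by blast
  define t where "t = p \<circ> Hilbert_Choice.inv s"
  have "t permutes {..<n}" unfolding t_def by (intro permutes_compose permutes_inv s p)
  moreover have "t i \<noteq> i" if i: "i < n" for i
  proof -
    have "Hilbert_Choice.inv s i < n" "s (Hilbert_Choice.inv s i) = i"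
      using i s(1) by (auto simp: permutes_inverses) (metis lessThan_iff permutes_in_image permutes_inv)
    then show ?thesis using s(2) by (metis comp_apply t_def)
  qed
  moreover have "p = t \<circ> s" unfolding t_def using s(1) by (simp add: comp_assoc permutes_inv_o)
  ultimately show ?thesis using s unfolding Der_def Sym_def by blast
qed

section \<open>Distances in the derangement graph\<close>

lemma not_adj_self:
  assumes "n \<ge> 1"
  shows "\<not> adj n w w"
proof
  assume adj: "adj n w w"
  then have "w \<circ> Hilbert_Choice.inv w = id" by (auto simp: adj_def Sym_def permutes_inv_o)
  with adj show False using id_notin_Der[OF assms] by (simp add: adj_def)
qed

lemma has_walk_0_iff: "has_walk n w v 0 \<longleftrightarrow> w = v"
proof
  assume "has_walk n w v 0"
  then obtain xs where "length xs = 1" "hd xs = w" "last xs = v" unfolding has_walk_def by auto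
  then show "w = v" by (cases xs) auto
qed (auto simp: has_walk_def intro!: exI[of _ "[v]"])

lemma has_walk_1_iff: "has_walk n w v 1 \<longleftrightarrow> adj n w v"
proof
  assume "has_walk n w v 1"
  then obtain xs where xs: "length xs = 2" "hd xs = w" "last xs = v" "adj n (xs ! 0) (xs ! 1)"
    unfolding has_walk_def by (auto simp: numeral_2_eq_2)
  then obtain a b where "xs = [a, b]" by (metis length_0_conv length_Suc_conv numeral_2_eq_2)
  then show "adj n w v" using xs by auto
qed (auto simp: has_walk_def intro!: exI[of _ "[w, v]"])

lemma has_walk_2I: "adj n w u \<Longrightarrow> adj n u v \<Longrightarrow> has_walk n w v 2"
  unfolding has_walk_def by (intro exI[of _ "[w, u, v]"]) (auto simp: less_Suc_eq numeral_2_eq_2)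

lemma adj_comp_iff:
  assumes "w \<in> Sym n"
  shows "adj n w (s \<circ> w) \<longleftrightarrow> s \<in> Der n"
proof -
  have w: "w permutes {..<n}" using assms by (simp add: Sym_def)
  then have "s \<circ> w \<circ> Hilbert_Choice.inv w = s" by (simp add: comp_assoc permutes_inv_o)
  moreover have "s \<in> Der n \<Longrightarrow> s \<circ> w \<in> Sym n"
    using w by (auto simp: Der_def Sym_def intro: permutes_compose)
  ultimately show ?thesis using assms by (auto simp: adj_def)
qed

lemma exists_common_neighbour:
  assumes n: "n \<ge> 4" and w: "w \<in> Sym n" and v: "v \<in> Sym n"
  shows "\<exists>u. adj n w u \<and> adj n u v"
proof -
  have wp: "w permutes {..<n}" using w by (simp add: Sym_def)
  have "v \<circ> Hilbert_Choice.inv w \<in> Sym n"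
    using w v by (auto simp: Sym_def intro: permutes_compose permutes_inv)
  then obtain t1 t2 where t: "t1 \<in> Der n" "t2 \<in> Der n" "v \<circ> Hilbert_Choice.inv w = t2 \<circ> t1"
    using Sym_product_of_two_Der[OF n] by blast
  have "v = t2 \<circ> (t1 \<circ> w)"
    using t(3) wp by (metis comp_assoc comp_id permutes_inv_o(2))
  moreover have "t1 \<circ> w \<in> Sym n"
    using t(1) wp Der_subset_Sym by (auto simp: Sym_def intro: permutes_compose)
  ultimately show ?thesis using adj_comp_iff t(1,2) w by metis
qed

lemma gdist_eq:
  assumes n: "n \<ge> 4" and w: "w \<in> Sym n" and v: "v \<in> Sym n"
  shows "int (gdist n w v) = 2 * (if w \<noteq> v then 1 else 0) - (if adj n w v then 1 else 0)"
proof (cases "w = v")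
  case True
  then have "gdist n w v = 0" unfolding gdist_def by (simp add: has_walk_0_iff)
  then show ?thesis using True not_adj_self[of n w] n by simp
next
  case ne: False
  show ?thesis
  proof (cases "adj n w v")
    case True
    have "gdist n w v = 1" unfolding gdist_def
    proof (rule Least_equality)
      show "has_walk n w v 1" using True has_walk_1_iff by simp
    qed (use ne has_walk_0_iff in \<open>auto simp: Suc_le_eq\<close>)
    then show ?thesis using True ne by simp
  next
    case False
    obtain u where "adj n w u" "adj n u v" using exists_common_neighbour[OF n w v] by blast
    then have "gdist n w v = 2" unfolding gdist_def
    proof (intro Least_equality has_walk_2I)
      fix k assume "has_walk n w v k"
      then show "2 \<le> k" using ne False has_walk_0_iff has_walk_1_iff
        by (metis One_nat_def Suc_1 less_2_cases not_le)
    qed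
    then show ?thesis using False ne by simp
  qed
qed

lemma lenD_Der:
  assumes "n \<ge> 1" "w \<in> Der n"
  shows "lenD n w = 1"
  unfolding lenD_def
proof (rule Least_equality)
  show "\<exists>ss. length ss = 1 \<and> set ss \<subseteq> Der n \<and> foldr (\<circ>) ss id = w"
    using assms by (intro exI[of _ "[w]"]) auto
qed (use assms id_notin_Der in \<open>auto simp: Suc_le_eq\<close>)

lemma lenD_eq_2:
  assumes n: "n \<ge> 4" and w: "w \<in> Sym n" "w \<notin> Der n" "w \<noteq> id"
  shows "lenD n w = 2"
  unfolding lenD_def
proof (rule Least_equality)
  obtain t1 t2 where "t1 \<in> Der n" "t2 \<in> Der n" "w = t2 \<circ> t1"
    using Sym_product_of_two_Der[OF n w(1)] by blast
  then show "\<exists>ss. length ss = 2 \<and> set ss \<subseteq> Der n \<and> foldr (\<circ>) ss id = w"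
    by (intro exI[of _ "[t2, t1]"]) auto
next
  fix k assume "\<exists>ss. length ss = k \<and> set ss \<subseteq> Der n \<and> foldr (\<circ>) ss id = w"
  then obtain ss where ss: "length ss = k" "set ss \<subseteq> Der n" "foldr (\<circ>) ss id = w" by blast
  show "2 \<le> k"
  proof (rule ccontr)
    assume "\<not> 2 \<le> k"
    then consider "ss = []" | a where "ss = [a]"
      using ss(1) by (cases ss; cases "tl ss") auto
    then show False using ss w by cases auto
  qed
qed

section \<open>Tabloids and Young permutation characters\<close>

text \<open>\<open>tabloids n mu\<close> is the set of ordered set partitions of \<open>{..<n}\<close> into blocks of sizes
  \<open>mu\<close>, encoded by the map sending each point to the index of its block; \<open>young_char n mu w\<close>
  counts those fixed by \<open>w\<close>.\<close>

definition tabloids :: "nat \<Rightarrow> int list \<Rightarrow> (nat \<Rightarrow> nat) set" where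
  "tabloids n mu = {f \<in> {..<n} \<rightarrow>\<^sub>E {..<length mu}.
     \<forall>i<length mu. int (card {j. j < n \<and> f j = i}) = mu ! i}"

lemma finite_tabloids [simp]: "finite (tabloids n mu)"
  by (rule finite_subset[of _ "{..<n} \<rightarrow>\<^sub>E {..<length mu}"])
    (auto simp: tabloids_def intro!: finite_PiE)

lemma tabloids_eq_empty_if_negative:
  assumes "i < length mu" "mu ! i < 0"
  shows "tabloids n mu = {}"
  using assms by (force simp: tabloids_def)

lemma young_char_eq_card:
  "young_char n mu w = int (card {f \<in> tabloids n mu. \<forall>j<n. f (w j) = f j})"
proof (cases "\<exists>x\<in>set mu. x < 0")
  case True
  then obtain i where "i < length mu" "mu ! i < 0" by (auto simp: in_set_conv_nth)
  then show ?thesis using tabloids_eq_empty_if_negative True by (simp add: young_char_def)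
next
  case False
  then show ?thesis unfolding young_char_def tabloids_def by (simp add: conj_assoc)
qed

lemma young_char_id: "young_char n mu id = int (card (tabloids n mu))"
  by (simp add: young_char_eq_card)

lemma card_fibre_lessThan_Suc:
  "card {j. j < Suc n \<and> f j = i} = card {j. j < n \<and> f j = i} + (if f n = i then 1 else 0)"
proof -
  have "{j. j < Suc n \<and> f j = i} = {j. j < n \<and> f j = i} \<union> (if f n = i then {n} else {})"
    by (auto simp: less_Suc_eq)
  then show ?thesis by (auto simp: card_insert_if)
qed

lemma restrict_in_tabloids:
  assumes f: "f \<in> tabloids (Suc n) mu" and k: "k < length mu" "f n = k"
  shows "restrict f {..<n} \<in> tabloids n (mu[k := mu ! k - 1])"
  unfolding tabloids_def mem_Collect_eq
proof (intro conjI allI impI)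
  show "restrict f {..<n} \<in> {..<n} \<rightarrow>\<^sub>E {..<length (mu[k := mu ! k - 1])}"
    using f by (auto simp: tabloids_def)
  fix i assume i: "i < length (mu[k := mu ! k - 1])"
  have "int (card {j. j < Suc n \<and> f j = i}) = mu ! i" using f i by (auto simp: tabloids_def)
  moreover have "card {j. j < n \<and> restrict f {..<n} j = i} = card {j. j < n \<and> f j = i}"
    by (rule arg_cong[where f = card]) auto
  ultimately show "int (card {j. j < n \<and> restrict f {..<n} j = i}) = mu[k := mu ! k - 1] ! i"
    unfolding card_fibre_lessThan_Suc using k i by (simp add: nth_list_update split: if_splits)
qed

lemma fun_upd_in_tabloids:
  assumes g: "g \<in> tabloids n (mu[k := mu ! k - 1])" and k: "k < length mu"
  shows "g(n := k) \<in> tabloids (Suc n) mu"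
  unfolding tabloids_def mem_Collect_eq
proof (intro conjI allI impI)
  show "g(n := k) \<in> {..<Suc n} \<rightarrow>\<^sub>E {..<length mu}"
    using g k by (auto simp: tabloids_def PiE_def Pi_def extensional_def)
  fix i assume i: "i < length mu"
  have "int (card {j. j < n \<and> g j = i}) = mu[k := mu ! k - 1] ! i" using g i by (auto simp: tabloids_def)
  moreover have "card {j. j < n \<and> (g(n := k)) j = i} = card {j. j < n \<and> g j = i}"
    by (rule arg_cong[where f = card]) auto
  ultimately show "int (card {j. j < Suc n \<and> (g(n := k)) j = i}) = mu ! i"
    unfolding card_fibre_lessThan_Suc using i k by (simp add: nth_list_update split: if_splits)
qed

lemma bij_betw_restrict_tabloids:
  assumes k: "k < length mu"
  shows "bij_betw (\<lambda>f. restrict f {..<n}) {f \<in> tabloids (Suc n) mu. f n = k}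
           (tabloids n (mu[k := mu ! k - 1]))"
proof (rule bij_betw_byWitness[where f' = "\<lambda>g. g(n := k)"])
  show "\<forall>f\<in>{f \<in> tabloids (Suc n) mu. f n = k}. (restrict f {..<n})(n := k) = f"
    by (auto simp: tabloids_def fun_eq_iff PiE_def extensional_def less_Suc_eq)
  show "\<forall>g\<in>tabloids n (mu[k := mu ! k - 1]). restrict (g(n := k)) {..<n} = g"
    by (auto simp: tabloids_def fun_eq_iff PiE_def extensional_def)
  show "(\<lambda>f. restrict f {..<n}) ` {f \<in> tabloids (Suc n) mu. f n = k} \<subseteq> tabloids n (mu[k := mu ! k - 1])"
    using restrict_in_tabloids k by blast
  show "(\<lambda>g. g(n := k)) ` tabloids n (mu[k := mu ! k - 1]) \<subseteq> {f \<in> tabloids (Suc n) mu. f n = k}"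
    using fun_upd_in_tabloids k by auto
qed

lemma card_tabloids_Suc:
  "card (tabloids (Suc n) mu) = (\<Sum>k<length mu. card (tabloids n (mu[k := mu ! k - 1])))"
proof -
  have "tabloids (Suc n) mu = (\<Union>k<length mu. {f \<in> tabloids (Suc n) mu. f n = k})"
    by (auto simp: tabloids_def PiE_def Pi_def)
  moreover have "card (\<Union>k<length mu. {f \<in> tabloids (Suc n) mu. f n = k}) =
      (\<Sum>k<length mu. card {f \<in> tabloids (Suc n) mu. f n = k})"
    by (rule card_UN_disjoint) auto
  ultimately have "card (tabloids (Suc n) mu) = (\<Sum>k<length mu. card {f \<in> tabloids (Suc n) mu. f n = k})"
    by simp
  also have "\<dots> = (\<Sum>k<length mu. card (tabloids n (mu[k := mu ! k - 1])))"
    by (rule sum.cong[OF refl], rule bij_betw_same_card, rule bij_betw_restrict_tabloids) simp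
  finally show ?thesis .
qed

lemma restrict_transpose_comp_in_tabloids:
  assumes f: "f \<in> tabloids n mu" and ab: "a < length mu" "b < length mu"
  shows "restrict (transpose a b \<circ> f) {..<n} \<in> tabloids n (map (\<lambda>i. mu ! transpose a b i) [0..<length mu])"
  unfolding tabloids_def mem_Collect_eq
proof (intro conjI allI impI)
  let ?t = "transpose a b"
  have t_lt: "?t i < length mu" if "i < length mu" for i using that ab by (auto simp: transpose_def)
  then show "restrict (?t \<circ> f) {..<n} \<in> {..<n} \<rightarrow>\<^sub>E {..<length (map (\<lambda>i. mu ! ?t i) [0..<length mu])}"
    using f by (auto simp: tabloids_def PiE_def Pi_def)
  fix i assume i: "i < length (map (\<lambda>i. mu ! ?t i) [0..<length mu])"
  then have "int (card {j. j < n \<and> f j = ?t i}) = mu ! ?t i" using f t_lt by (auto simp: tabloids_def)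
  moreover have "?t x = i \<longleftrightarrow> x = ?t i" for x by (metis transpose_involutory)
  then have "{j. j < n \<and> restrict (?t \<circ> f) {..<n} j = i} = {j. j < n \<and> f j = ?t i}" by auto
  ultimately show
    "int (card {j. j < n \<and> restrict (?t \<circ> f) {..<n} j = i}) = map (\<lambda>i. mu ! ?t i) [0..<length mu] ! i"
    using i by simp
qed

lemma card_tabloids_transpose_parts:
  assumes ab: "a < length mu" "b < length mu"
  shows "card (tabloids n (map (\<lambda>i. mu ! transpose a b i) [0..<length mu])) = card (tabloids n mu)"
proof -
  let ?t = "transpose a b"
  let ?m = "map (\<lambda>i. mu ! ?t i) [0..<length mu]"
  have m_t: "map (\<lambda>i. ?m ! ?t i) [0..<length ?m] = mu"
    using ab by (intro nth_equalityI) (auto simp: transpose_def)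
  have from_m: "\<And>f. f \<in> tabloids n ?m \<Longrightarrow> restrict (?t \<circ> f) {..<n} \<in> tabloids n mu"
    using restrict_transpose_comp_in_tabloids[of _ n ?m a b] ab m_t by simp
  have "bij_betw (\<lambda>f. restrict (?t \<circ> f) {..<n}) (tabloids n mu) (tabloids n ?m)"
  proof (rule bij_betw_byWitness[where f' = "\<lambda>f. restrict (?t \<circ> f) {..<n}"])
    show "\<forall>f\<in>tabloids n mu. restrict (?t \<circ> restrict (?t \<circ> f) {..<n}) {..<n} = f"
      "\<forall>f\<in>tabloids n ?m. restrict (?t \<circ> restrict (?t \<circ> f) {..<n}) {..<n} = f"
      by (auto simp: tabloids_def fun_eq_iff PiE_def extensional_def)
    show "(\<lambda>f. restrict (?t \<circ> f) {..<n}) ` tabloids n mu \<subseteq> tabloids n ?m"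
      using restrict_transpose_comp_in_tabloids ab by blast
    show "(\<lambda>f. restrict (?t \<circ> f) {..<n}) ` tabloids n ?m \<subseteq> tabloids n mu"
      using from_m by blast
  qed
  then show ?thesis by (simp add: bij_betw_same_card)
qed

lemma tabloids_append_0: "tabloids n (mu @ [0]) = tabloids n mu"
proof safe
  fix f assume f: "f \<in> tabloids n (mu @ [0])"
  have "card {j. j < n \<and> f j = length mu} = 0" using f by (auto simp: tabloids_def)
  then have "\<forall>j<n. f j \<noteq> length mu" by auto
  then show "f \<in> tabloids n mu"
    using f by (auto simp: tabloids_def PiE_def Pi_def nth_append less_Suc_eq)
next
  fix f assume f: "f \<in> tabloids n mu"
  then have "{j. j < n \<and> f j = length mu} = {}" by (auto simp: tabloids_def PiE_def Pi_def)
  then show "f \<in> tabloids n (mu @ [0])"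
    using f by (auto simp: tabloids_def PiE_def Pi_def nth_append less_Suc_eq)
qed

lemma sum_list_update_int:
  "k < length xs \<Longrightarrow> sum_list (xs[k := (x::int)]) = sum_list xs - xs ! k + x"
proof (induction xs arbitrary: k)
  case (Cons y ys) then show ?case by (cases k) auto
qed simp

lemma tabloids_nonempty:
  "(\<forall>x\<in>set mu. 0 \<le> x) \<Longrightarrow> sum_list mu = int n \<Longrightarrow> tabloids n mu \<noteq> {}"
proof (induction n arbitrary: mu)
  case 0
  then have z: "\<forall>x\<in>set mu. x = 0" using sum_list_nonneg_eq_0_iff by auto
  have "(\<lambda>_. undefined) \<in> tabloids 0 mu" unfolding tabloids_def using z by (auto simp: nth_mem)
  then show ?case by blast
next
  case (Suc n)
  have "\<exists>x\<in>set mu. x \<noteq> 0"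
    using Suc.prems sum_list_nonneg_eq_0_iff[of mu] by auto
  then obtain k where k: "k < length mu" "mu ! k > 0"
    using Suc.prems(1) by (metis in_set_conv_nth order_le_less)
  let ?m = "mu[k := mu ! k - 1]"
  have "\<forall>x\<in>set ?m. 0 \<le> x"
  proof
    fix x assume "x \<in> set ?m"
    then obtain i where i: "i < length mu" "?m ! i = x" by (auto simp: in_set_conv_nth)
    then show "0 \<le> x" using Suc.prems(1) k by (cases "i = k") (auto simp: nth_list_update)
  qed
  moreover have "sum_list ?m = int n" using Suc.prems(2) k by (simp add: sum_list_update_int)
  ultimately have "tabloids n ?m \<noteq> {}" by (rule Suc.IH)
  then have "card (tabloids n ?m) > 0" by (simp add: card_gt_0_iff)
  also have "card (tabloids n ?m) \<le> (\<Sum>k<length mu. card (tabloids n (mu[k := mu ! k - 1])))"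
    by (rule member_le_sum[where f = "\<lambda>k. card (tabloids n (mu[k := mu ! k - 1]))"]) (use k in auto)
  also have "\<dots> = card (tabloids (Suc n) mu)" by (simp add: card_tabloids_Suc)
  finally have "0 < card (tabloids (Suc n) mu)" .
  then show ?case by auto
qed

lemma restrict_comp_permutes_in_tabloids:
  assumes f: "f \<in> tabloids n mu" and q: "q permutes {..<n}"
  shows "restrict (f \<circ> q) {..<n} \<in> tabloids n mu"
  unfolding tabloids_def mem_Collect_eq
proof (intro conjI allI impI)
  have ql: "\<And>j. j < n \<Longrightarrow> q j < n" using q by (metis lessThan_iff permutes_in_image)
  show "restrict (f \<circ> q) {..<n} \<in> {..<n} \<rightarrow>\<^sub>E {..<length mu}"
    using f ql by (auto simp: tabloids_def PiE_def Pi_def)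
  fix i assume i: "i < length mu"
  have "q ` {j. j < n \<and> f (q j) = i} = {k. k < n \<and> f k = i}"
  proof
    show "q ` {j. j < n \<and> f (q j) = i} \<subseteq> {k. k < n \<and> f k = i}" using ql by auto
    show "{k. k < n \<and> f k = i} \<subseteq> q ` {j. j < n \<and> f (q j) = i}"
    proof
      fix k assume k: "k \<in> {k. k < n \<and> f k = i}"
      have "Hilbert_Choice.inv q k \<in> {..<n}" using k permutes_in_image[OF permutes_inv[OF q]] by simp
      moreover have "q (Hilbert_Choice.inv q k) = k" using q by (simp add: permutes_inverses)
      ultimately show "k \<in> q ` {j. j < n \<and> f (q j) = i}"
        using k by (intro image_eqI[of _ _ "Hilbert_Choice.inv q k"]) auto
    qed
  qed
  moreover have "inj_on q {j. j < n \<and> f (q j) = i}"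
    by (rule inj_on_subset[OF permutes_inj[OF q] subset_UNIV])
  ultimately have "card {j. j < n \<and> f (q j) = i} = card {k. k < n \<and> f k = i}"
    using card_image by fastforce
  moreover have "{j. j < n \<and> restrict (f \<circ> q) {..<n} j = i} = {j. j < n \<and> f (q j) = i}" by auto
  ultimately show "int (card {j. j < n \<and> restrict (f \<circ> q) {..<n} j = i}) = mu ! i"
    using f i by (auto simp: tabloids_def)
qed

lemma exists_permutes_equal_fibres:
  fixes f g :: "nat \<Rightarrow> 'a"
  assumes fibres: "\<And>i. card {j. j < n \<and> g j = i} = card {j. j < n \<and> f j = i}"
  shows "\<exists>q. q permutes {..<n} \<and> (\<forall>j<n. g j = f (q j))"
proof -
  let ?G = "\<lambda>i. {j. j < n \<and> g j = i}" and ?F = "\<lambda>i. {j. j < n \<and> f j = i}"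
  have "\<exists>h. bij_betw h (?G i) (?F i)" for i
    by (intro finite_same_card_bij) (simp_all add: fibres)
  then obtain h where h: "\<And>i. bij_betw (h i) (?G i) (?F i)" by metis
  define q where "q j = (if j < n then h (g j) j else j)" for j
  have q: "q j < n \<and> f (q j) = g j" if "j < n" for j
    using bij_betwE[OF h[of "g j"]] that by (simp add: q_def)
  have "inj_on q {..<n}"
  proof (rule inj_onI)
    fix x y assume xy: "x \<in> {..<n}" "y \<in> {..<n}" "q x = q y"
    then have "g x = g y" using q by (metis lessThan_iff)
    then show "x = y"
      using xy bij_betw_imp_inj_on[OF h[of "g x"]] by (auto simp: q_def dest: inj_onD)
  qed
  moreover have "q ` {..<n} \<subseteq> {..<n}" using q by auto
  ultimately have "bij_betw q {..<n} {..<n}" by (simp add: bij_betw_def endo_inj_surj)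
  then have "q permutes {..<n}" by (rule bij_imp_permutes) (simp add: q_def)
  then show ?thesis using q by auto
qed

lemma tabloids_transitive:
  assumes f: "f \<in> tabloids n mu" and g: "g \<in> tabloids n mu"
  shows "\<exists>q. q permutes {..<n} \<and> (\<forall>j<n. g j = f (q j))"
proof (rule exists_permutes_equal_fibres)
  fix i
  show "card {j. j < n \<and> g j = i} = card {j. j < n \<and> f j = i}"
  proof (cases "i < length mu")
    case True
    then have "int (card {j. j < n \<and> g j = i}) = mu ! i" "int (card {j. j < n \<and> f j = i}) = mu ! i"
      using f g by (auto simp: tabloids_def)
    then show ?thesis by simp
  next
    case False
    then have empty: "{j. j < n \<and> h j = i} = {}" if "h \<in> tabloids n mu" for h
      using that by (auto simp: tabloids_def PiE_def Pi_def)
    show ?thesis by (simp only: empty[OF f] empty[OF g])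
  qed
qed

lemma card_tabloid_transporters:
  assumes f: "f \<in> tabloids n mu" and g: "g \<in> tabloids n mu"
  shows "card {q \<in> Sym n. \<forall>j<n. f (q j) = g j} = card {q \<in> Sym n. \<forall>j<n. f (q j) = f j}"
proof -
  let ?St = "{q \<in> Sym n. \<forall>j<n. f (q j) = f j}" and ?C = "{q \<in> Sym n. \<forall>j<n. f (q j) = g j}"
  obtain q0 where q0: "q0 permutes {..<n}" "\<forall>j<n. g j = f (q0 j)"
    using tabloids_transitive[OF f g] by blast
  have q0_lt: "q0 j < n" "Hilbert_Choice.inv q0 j < n" if "j < n" for j
    using that q0(1) permutes_inv[OF q0(1)] by (metis lessThan_iff permutes_in_image)+
  have "bij_betw (\<lambda>s. s \<circ> q0) ?St ?C"
  proof (rule bij_betw_byWitness[where f' = "\<lambda>q. q \<circ> Hilbert_Choice.inv q0"])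
    show "\<forall>s\<in>?St. s \<circ> q0 \<circ> Hilbert_Choice.inv q0 = s" "\<forall>q\<in>?C. q \<circ> Hilbert_Choice.inv q0 \<circ> q0 = q"
      using q0(1) by (simp_all add: comp_assoc permutes_inv_o)
    show "(\<lambda>s. s \<circ> q0) ` ?St \<subseteq> ?C"
      using q0 q0_lt by (auto simp: Sym_def intro: permutes_compose)
    have "f (q (Hilbert_Choice.inv q0 j)) = f j" if "q \<in> ?C" "j < n" for q j
      using that q0 q0_lt(2)[OF \<open>j < n\<close>] by (simp add: permutes_inverses)
    then show "(\<lambda>q. q \<circ> Hilbert_Choice.inv q0) ` ?C \<subseteq> ?St"
      using q0(1) by (auto simp: Sym_def intro: permutes_compose permutes_inv)
  qed
  then show ?thesis by (simp add: bij_betw_same_card)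
qed

lemma card_tabloids_mult_stabiliser:
  assumes f: "f \<in> tabloids n mu"
  shows "card (tabloids n mu) * card {q \<in> Sym n. \<forall>j<n. f (q j) = f j} = fact n"
proof -
  define C where "C g = {q \<in> Sym n. \<forall>j<n. f (q j) = g j}" for g
  have Sym_eq: "Sym n = (\<Union>g\<in>tabloids n mu. C g)"
  proof
    show "Sym n \<subseteq> (\<Union>g\<in>tabloids n mu. C g)"
    proof
      fix q assume q: "q \<in> Sym n"
      then have "restrict (f \<circ> q) {..<n} \<in> tabloids n mu"
        using restrict_comp_permutes_in_tabloids[OF f] by (simp add: Sym_def)
      moreover have "q \<in> C (restrict (f \<circ> q) {..<n})" using q by (simp add: C_def)
      ultimately show "q \<in> (\<Union>g\<in>tabloids n mu. C g)" by blast
    qed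
  qed (auto simp: C_def)
  have disjoint: "C g1 \<inter> C g2 = {}"
    if "g1 \<in> tabloids n mu" "g2 \<in> tabloids n mu" "g1 \<noteq> g2" for g1 g2
  proof -
    have "g1 \<in> extensional {..<n}" "g2 \<in> extensional {..<n}"
      using that by (auto simp: tabloids_def PiE_def)
    then have "\<exists>j<n. g1 j \<noteq> g2 j" using \<open>g1 \<noteq> g2\<close> by (meson extensionalityI lessThan_iff)
    then show ?thesis by (auto simp: C_def)
  qed
  have finite_C: "finite (C g)" for g by (simp add: C_def)
  have "fact n = card (Sym n)" by (simp add: card_Sym)
  also have "\<dots> = (\<Sum>g\<in>tabloids n mu. card (C g))"
    unfolding Sym_eq by (rule card_UN_disjoint) (simp_all add: finite_C disjoint)
  also have "\<dots> = (\<Sum>g\<in>tabloids n mu. card (C f))"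
    using card_tabloid_transporters[OF f] by (simp add: C_def)
  finally show ?thesis by (simp add: C_def)
qed

lemma of_nat_card_filter_eq_sum:
  "finite A \<Longrightarrow> of_nat (card {x \<in> A. P x}) = (\<Sum>x\<in>A. if P x then 1 else 0 :: 'a :: semiring_1)"
  by (simp add: sum.If_cases Int_def)

text \<open>Burnside's lemma in the transitive case: the permutation character of a transitive action
  has average value one.\<close>

lemma sum_young_char:
  "(\<Sum>w\<in>Sym n. young_char n mu w) = (if tabloids n mu = {} then 0 else int (fact n))"
proof (cases "tabloids n mu = {}")
  case False
  let ?T = "tabloids n mu"
  have "(\<Sum>w\<in>Sym n. young_char n mu w) = (\<Sum>w\<in>Sym n. \<Sum>f\<in>?T. if \<forall>j<n. f (w j) = f j then 1 else 0)"
    by (simp add: young_char_eq_card of_nat_card_filter_eq_sum)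
  also have "\<dots> = (\<Sum>f\<in>?T. \<Sum>w\<in>Sym n. if \<forall>j<n. f (w j) = f j then 1 else 0)"
    by (rule sum.swap)
  also have "\<dots> = (\<Sum>f\<in>?T. int (fact n div card ?T))"
  proof (rule sum.cong[OF refl])
    fix f assume f: "f \<in> ?T"
    have "card ?T > 0" using False by (simp add: card_gt_0_iff)
    then have "card {w \<in> Sym n. \<forall>j<n. f (w j) = f j} = fact n div card ?T"
      by (simp flip: card_tabloids_mult_stabiliser[OF f])
    then show "(\<Sum>w\<in>Sym n. if \<forall>j<n. f (w j) = f j then 1 else 0) = int (fact n div card ?T)"
      by (simp flip: of_nat_card_filter_eq_sum)
  qed
  also have "\<dots> = int (fact n)"
  proof -
    obtain f where "f \<in> ?T" using False by blast
    then have "card ?T dvd fact n" by (simp flip: card_tabloids_mult_stabiliser)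
    then show ?thesis by (metis dvd_mult_div_cancel of_nat_mult sum_constant)
  qed
  finally show ?thesis using False by simp
qed (simp add: young_char_eq_card)

section \<open>The Jacobi--Trudi expansion of the degree\<close>

definition jt_parts :: "int list \<Rightarrow> (nat \<Rightarrow> nat) \<Rightarrow> int list" where
  "jt_parts a \<sigma> = map (\<lambda>i. a ! i - int i + int (\<sigma> i)) [0..<length a]"

definition jt_degree :: "nat \<Rightarrow> int list \<Rightarrow> int" where
  "jt_degree n a = (\<Sum>\<sigma> | \<sigma> permutes {..<length a}. sign \<sigma> * int (card (tabloids n (jt_parts a \<sigma>))))"

text \<open>\<open>jt_degree n a\<close> is the Leibniz expansion of the Jacobi--Trudi determinant
  \<open>n! \<cdot> det (1 / (a\<^sub>i - i + j)!)\<close>, with \<open>1 / k! = 0\<close> for \<open>k < 0\<close>.\<close>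

lemma length_jt_parts [simp]: "length (jt_parts a \<sigma>) = length a"
  by (simp add: jt_parts_def)

lemma nth_jt_parts [simp]: "i < length a \<Longrightarrow> jt_parts a \<sigma> ! i = a ! i - int i + int (\<sigma> i)"
  by (simp add: jt_parts_def)

lemma chi_eq_jt:
  "chi n lam w = (\<Sum>\<sigma> | \<sigma> permutes {..<length lam}. sign \<sigma> * young_char n (jt_parts (map int lam) \<sigma>) w)"
proof -
  have "map (\<lambda>i. int (lam ! i) - int i + int (\<sigma> i)) [0..<length lam] = jt_parts (map int lam) \<sigma>" for \<sigma>
    by (rule nth_equalityI) auto
  then show ?thesis by (simp add: chi_def)
qed

lemma fdeg_eq_jt_degree: "fdeg n lam = jt_degree n (map int lam)"
  by (simp add: fdeg_def chi_eq_jt jt_degree_def young_char_id)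

lemma sum_sign_eq_0_if_transpose_invariant:
  fixes g :: "(nat \<Rightarrow> nat) \<Rightarrow> int"
  assumes S: "finite S" and ab: "a \<in> S" "b \<in> S" "a \<noteq> b"
    and g: "\<And>\<sigma>. \<sigma> permutes S \<Longrightarrow> g (\<sigma> \<circ> transpose a b) = g \<sigma>"
  shows "(\<Sum>\<sigma> | \<sigma> permutes S. sign \<sigma> * g \<sigma>) = 0"
proof -
  let ?t = "transpose a b"
  have tp: "?t permutes S" by (rule permutes_swap_id[OF ab(1,2)])
  have "(\<Sum>\<sigma> | \<sigma> permutes S. sign \<sigma> * g \<sigma>) = (\<Sum>\<sigma> | \<sigma> permutes S. sign (\<sigma> \<circ> ?t) * g (\<sigma> \<circ> ?t))"
    by (rule sum_permutations_compose_right[OF tp])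
  also have "\<dots> = (\<Sum>\<sigma> | \<sigma> permutes S. - (sign \<sigma> * g \<sigma>))"
  proof (rule sum.cong[OF refl])
    fix \<sigma> assume "\<sigma> \<in> {\<sigma>. \<sigma> permutes S}"
    then have sp: "\<sigma> permutes S" by simp
    have "sign (\<sigma> \<circ> ?t) = sign \<sigma> * sign ?t"
      by (rule sign_compose) (use sp tp S in \<open>auto simp: permutation_permutes\<close>)
    then show "sign (\<sigma> \<circ> ?t) * g (\<sigma> \<circ> ?t) = - (sign \<sigma> * g \<sigma>)"
      using g[OF sp] ab by (simp add: sign_swap_id)
  qed
  also have "\<dots> = - (\<Sum>\<sigma> | \<sigma> permutes S. sign \<sigma> * g \<sigma>)" by (simp add: sum_negf)
  finally show ?thesis by simp
qed

lemma jt_parts_decrement: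
  "k < length a \<Longrightarrow> (jt_parts a \<sigma>)[k := a ! k - int k + int (\<sigma> k) - 1] = jt_parts (a[k := a ! k - 1]) \<sigma>"
  by (rule nth_equalityI) (auto simp: nth_list_update)

lemma jt_degree_Suc:
  "jt_degree (Suc n) a = (\<Sum>k<length a. jt_degree n (a[k := a ! k - 1]))"
proof -
  have "jt_degree (Suc n) a = (\<Sum>\<sigma> | \<sigma> permutes {..<length a}.
      \<Sum>k<length a. sign \<sigma> * int (card (tabloids n (jt_parts (a[k := a ! k - 1]) \<sigma>))))"
    unfolding jt_degree_def card_tabloids_Suc by (simp add: sum_distrib_left jt_parts_decrement)
  also have "\<dots> = (\<Sum>k<length a. jt_degree n (a[k := a ! k - 1]))"
    unfolding jt_degree_def by (subst sum.swap) simp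
  finally show ?thesis .
qed

lemma jt_degree_eq_0_if_equal_shifted_parts:
  assumes k: "Suc k < length a" and eq: "a ! k - int k = a ! Suc k - int (Suc k)"
  shows "jt_degree n a = 0"
  unfolding jt_degree_def
proof (rule sum_sign_eq_0_if_transpose_invariant[where a = k and b = "Suc k"])
  fix \<sigma> :: "nat \<Rightarrow> nat" assume sp: "\<sigma> permutes {..<length a}"
  let ?t = "transpose k (Suc k)"
  have "jt_parts a (\<sigma> \<circ> ?t) = map (\<lambda>i. jt_parts a \<sigma> ! ?t i) [0..<length (jt_parts a \<sigma>)]"
  proof (rule nth_equalityI)
    fix i assume i: "i < length (jt_parts a (\<sigma> \<circ> ?t))"
    have til: "?t i < length a" using i k by (auto simp: transpose_def)
    have "a ! i - int i = a ! ?t i - int (?t i)" using eq by (auto simp: transpose_def)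
    then show "jt_parts a (\<sigma> \<circ> ?t) ! i = map (\<lambda>i. jt_parts a \<sigma> ! ?t i) [0..<length (jt_parts a \<sigma>)] ! i"
      using i til by simp
  qed simp
  then show "int (card (tabloids n (jt_parts a (\<sigma> \<circ> ?t)))) = int (card (tabloids n (jt_parts a \<sigma>)))"
    using card_tabloids_transpose_parts[of k "jt_parts a \<sigma>" "Suc k" n] k by simp
qed (use k in auto)

lemma permutes_lessThan_Suc_fixing_last:
  "{\<sigma>. \<sigma> permutes {..<Suc l} \<and> \<sigma> l = l} = {\<sigma>. \<sigma> permutes {..<l}}"
proof safe
  fix \<sigma> assume "\<sigma> permutes {..<Suc l}" "\<sigma> l = l"
  then show "\<sigma> permutes {..<l}" using permutes_superset[of \<sigma> "{..<Suc l}" "{..<l}"] by (auto simp: less_Suc_eq)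
next
  fix \<sigma> assume "\<sigma> permutes {..<l}"
  then show "\<sigma> permutes {..<Suc l}" by (rule permutes_subset) auto
  show "\<sigma> l = l" using \<open>\<sigma> permutes {..<l}\<close> by (simp add: permutes_not_in)
qed

lemma jt_degree_append_0: "jt_degree n (a @ [0]) = jt_degree n a"
proof -
  let ?l = "length a"
  let ?g = "\<lambda>\<sigma>. sign \<sigma> * int (card (tabloids n (jt_parts (a @ [0]) \<sigma>)))"
  have "jt_degree n (a @ [0]) = (\<Sum>\<sigma> | \<sigma> permutes {..<Suc ?l}. ?g \<sigma>)" unfolding jt_degree_def by simp
  also have "\<dots> = (\<Sum>\<sigma> \<in> {\<sigma>. \<sigma> permutes {..<Suc ?l} \<and> \<sigma> ?l = ?l}. ?g \<sigma>)"
  proof (rule sum.mono_neutral_right)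
    show "finite {\<sigma>. \<sigma> permutes {..<Suc ?l}}" by (rule finite_permutations) simp
    show "{\<sigma>. \<sigma> permutes {..<Suc ?l} \<and> \<sigma> ?l = ?l} \<subseteq> {\<sigma>. \<sigma> permutes {..<Suc ?l}}" by auto
    show "\<forall>\<sigma>\<in>{\<sigma>. \<sigma> permutes {..<Suc ?l}} - {\<sigma>. \<sigma> permutes {..<Suc ?l} \<and> \<sigma> ?l = ?l}. ?g \<sigma> = 0"
    proof
      fix \<sigma> assume "\<sigma> \<in> {\<sigma>. \<sigma> permutes {..<Suc ?l}} - {\<sigma>. \<sigma> permutes {..<Suc ?l} \<and> \<sigma> ?l = ?l}"
      then have sp: "\<sigma> permutes {..<Suc ?l}" and ne: "\<sigma> ?l \<noteq> ?l" by auto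
      have "\<sigma> ?l < Suc ?l" using sp by (metis lessThan_iff lessI permutes_in_image)
      then have "\<sigma> ?l < ?l" using ne by simp
      then have "jt_parts (a @ [0]) \<sigma> ! ?l < 0" by (simp add: nth_append)
      then have "tabloids n (jt_parts (a @ [0]) \<sigma>) = {}" by (intro tabloids_eq_empty_if_negative[of ?l]) auto
      then show "?g \<sigma> = 0" by simp
    qed
  qed
  also have "\<dots> = (\<Sum>\<sigma> | \<sigma> permutes {..<?l}. sign \<sigma> * int (card (tabloids n (jt_parts a \<sigma>))))"
    unfolding permutes_lessThan_Suc_fixing_last
  proof (rule sum.cong[OF refl])
    fix \<sigma> assume "\<sigma> \<in> {\<sigma>. \<sigma> permutes {..<?l}}"
    then have "\<sigma> ?l = ?l" by (simp add: permutes_not_in)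
    then have "jt_parts (a @ [0]) \<sigma> = jt_parts a \<sigma> @ [0]"
      by (intro nth_equalityI) (auto simp: nth_append less_Suc_eq)
    then show "?g \<sigma> = sign \<sigma> * int (card (tabloids n (jt_parts a \<sigma>)))" by (simp add: tabloids_append_0)
  qed
  finally show ?thesis unfolding jt_degree_def .
qed

definition partition_nth :: "nat \<Rightarrow> nat list \<Rightarrow> bool" where
  "partition_nth n lam \<longleftrightarrow>
     (\<forall>i j. i \<le> j \<longrightarrow> j < length lam \<longrightarrow> lam ! j \<le> lam ! i) \<and> (\<forall>i<length lam. 0 < lam ! i) \<and>
     sum_list lam = n"

lemma is_partition_imp_partition_nth: "is_partition n lam \<Longrightarrow> partition_nth n lam"
  unfolding is_partition_def partition_nth_def by (auto intro: sorted_rev_nth_mono)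

lemma jt_degree_Nil: "jt_degree 0 [] = 1"
  unfolding jt_degree_def by (simp add: tabloids_def jt_parts_def)

lemma partition_nth_decrement:
  assumes p: "partition_nth (Suc n) lam" and k: "k < length lam" and two: "lam ! k \<ge> 2"
    and lt: "Suc k < length lam \<Longrightarrow> lam ! Suc k < lam ! k"
  shows "partition_nth n (lam[k := lam ! k - 1])"
  unfolding partition_nth_def
proof (intro conjI allI impI)
  have mono: "\<And>i j. i \<le> j \<Longrightarrow> j < length lam \<Longrightarrow> lam ! j \<le> lam ! i" using p by (auto simp: partition_nth_def)
  fix i j assume ij: "i \<le> j" "j < length (lam[k := lam ! k - 1])"
  show "lam[k := lam ! k - 1] ! j \<le> lam[k := lam ! k - 1] ! i"
  proof (cases "i = k")
    case True
    show ?thesis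
    proof (cases "j = k")
      case False
      then have "Suc k \<le> j" using ij True by auto
      then have "lam ! j \<le> lam ! Suc k" using mono ij by simp
      then show ?thesis using True False lt ij by (auto simp: nth_list_update)
    qed (use True in simp)
  next
    case False
    then show ?thesis using mono[of i j] mono[of i k] ij k by (auto simp: nth_list_update)
  qed
next
  fix i assume "i < length (lam[k := lam ! k - 1])"
  then show "0 < lam[k := lam ! k - 1] ! i" using p two by (cases "i = k") (auto simp: partition_nth_def nth_list_update)
next
  show "sum_list (lam[k := lam ! k - 1]) = n" using p k two by (simp add: partition_nth_def sum_list_update)
qed

lemma map_int_decrement: "k < length lam \<Longrightarrow> lam ! k \<ge> 1 \<Longrightarrow>
   (map int lam)[k := int (lam ! k) - 1] = map int (lam[k := lam ! k - 1])"
  by (simp add: map_update of_nat_diff)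

lemma jt_degree_decrement_eq_0:
  assumes k: "Suc k < length lam" and eq: "lam ! Suc k = lam ! k"
  shows "jt_degree n ((map int lam)[k := int (lam ! k) - 1]) = 0"
  by (rule jt_degree_eq_0_if_equal_shifted_parts[where k = k]) (use k eq in \<open>auto simp: nth_list_update\<close>)

lemma partition_nth_snoc_1: "partition_nth (Suc n) (b @ [1]) \<Longrightarrow> partition_nth n b"
  unfolding partition_nth_def
proof (intro conjI allI impI; elim conjE)
  fix i j
  assume "\<forall>i j. i \<le> j \<longrightarrow> j < length (b @ [1]) \<longrightarrow> (b @ [1]) ! j \<le> (b @ [1]) ! i"
    and ij: "i \<le> j" "j < length b"
  then have "(b @ [1]) ! j \<le> (b @ [1]) ! i" by simp
  then show "b ! j \<le> b ! i" using ij by (simp add: nth_append)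
next
  fix i
  assume "\<forall>i<length (b @ [1]). 0 < (b @ [1]) ! i" and i: "i < length b"
  then have "0 < (b @ [1]) ! i" by simp
  then show "0 < b ! i" using i by (simp add: nth_append)
qed simp

text \<open>Positivity comes from the branching rule \<open>jt_degree_Suc\<close>: removing a box from a corner of
  \<open>\<lambda>\<close> gives a partition, removing it elsewhere makes two shifted parts equal.\<close>

lemma jt_degree_pos: "partition_nth n lam \<Longrightarrow> jt_degree n (map int lam) > 0"
proof (induction n arbitrary: lam)
  case 0
  then have "lam = []" by (cases lam) (auto simp: partition_nth_def)
  then show ?case by (simp add: jt_degree_Nil)
next
  case (Suc n)
  have p: "partition_nth (Suc n) lam" by fact
  have mono: "\<And>i j. i \<le> j \<Longrightarrow> j < length lam \<Longrightarrow> lam ! j \<le> lam ! i"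
    and pos: "\<And>i. i < length lam \<Longrightarrow> lam ! i \<ge> 1"
    using p by (auto simp: partition_nth_def Suc_le_eq)
  obtain m where l: "length lam = Suc m" using p by (cases lam) (auto simp: partition_nth_def)
  let ?t = "\<lambda>k. jt_degree n ((map int lam)[k := int (lam ! k) - 1])"
  have corner_pos: "?t k > 0"
    if k: "k < length lam" "lam ! k \<ge> 2" "Suc k < length lam \<Longrightarrow> lam ! Suc k < lam ! k" for k
  proof -
    have "partition_nth n (lam[k := lam ! k - 1])" using partition_nth_decrement[OF p k(1) k(2)] k(3) by blast
    then have "jt_degree n (map int (lam[k := lam ! k - 1])) > 0" by (rule Suc.IH)
    then show ?thesis using map_int_decrement[OF k(1)] k(2) by simp
  qed
  have nonneg: "?t k \<ge> 0" if k: "k < m" for k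
  proof (cases "lam ! Suc k < lam ! k")
    case True
    then show ?thesis using corner_pos[of k] pos[of "Suc k"] k l by simp
  next
    case False
    then have "lam ! Suc k = lam ! k" using mono[of k "Suc k"] k l by simp
    then show ?thesis using jt_degree_decrement_eq_0[of k lam n] k l by simp
  qed
  have last_pos: "?t m > 0"
  proof (cases "lam ! m \<ge> 2")
    case False
    then have "lam ! m = 1" using pos[of m] l by simp
    define b where "b = butlast lam"
    have "lam \<noteq> []" using l by auto
    then have lam: "lam = b @ [1]"
      using append_butlast_last_id[of lam] last_conv_nth[of lam] l \<open>lam ! m = 1\<close>
      unfolding b_def by simp
    then have "length b = m" using l by simp
    then have "(map int lam)[m := int (lam ! m) - 1] = map int b @ [0]"
      using lam by (simp add: list_update_append nth_append)
    moreover have "partition_nth n b" using p lam partition_nth_snoc_1 by simp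
    ultimately show ?thesis by (simp add: jt_degree_append_0 Suc.IH)
  qed (use corner_pos[of m] l in simp)
  have "jt_degree (Suc n) (map int lam) = (\<Sum>k<m. ?t k) + ?t m"
    using jt_degree_Suc[of n "map int lam"] l by simp
  also have "\<dots> > 0" using last_pos nonneg by (intro add_nonneg_pos sum_nonneg) auto
  finally show ?case .
qed

lemma fdeg_pos: "is_partition n lam \<Longrightarrow> fdeg n lam > 0"
  using jt_degree_pos is_partition_imp_partition_nth fdeg_eq_jt_degree by simp

section \<open>Character sums over the symmetric group\<close>

lemma tabloids_eq_empty_iff:
  "sum_list mu = int n \<Longrightarrow> tabloids n mu = {} \<longleftrightarrow> (\<exists>i<length mu. mu ! i < 0)"
  using tabloids_eq_empty_if_negative tabloids_nonempty by (metis in_set_conv_nth not_le)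

lemma sum_list_jt_parts:
  assumes "\<sigma> permutes {..<length a}"
  shows "sum_list (jt_parts a \<sigma>) = sum_list a"
proof -
  have "bij_betw \<sigma> {0..<length a} {0..<length a}"
    using permutes_imp_bij[OF assms] by (simp add: atLeast0LessThan)
  then have "(\<Sum>i=0..<length a. int (\<sigma> i)) = (\<Sum>i=0..<length a. int i)"
    using sum.reindex_bij_betw[of \<sigma> _ _ int] by simp
  then show ?thesis by (simp add: sum_list_sum_nth sum.distrib sum_subtractf)
qed

lemma sum_chi:
  "(\<Sum>w\<in>Sym n. chi n lam w) = (\<Sum>\<sigma> | \<sigma> permutes {..<length lam}.
      sign \<sigma> * (if tabloids n (jt_parts (map int lam) \<sigma>) = {} then 0 else int (fact n)))"
  unfolding chi_eq_jt by (subst sum.swap) (simp add: sum_young_char flip: sum_distrib_left)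

text \<open>For a partition with at least two parts the first two entries of every \<open>jt_parts\<close> are
  nonnegative, so composing \<open>\<sigma>\<close> with the transposition of \<open>0\<close> and \<open>1\<close> does not change
  whether a summand of \<open>sum_chi\<close> vanishes, and the signed sum cancels.\<close>

lemma tabloids_jt_parts_eq_empty_iff:
  assumes p: "is_partition n lam" and l: "length lam \<ge> 2" and \<sigma>: "\<sigma> permutes {..<length lam}"
  shows "tabloids n (jt_parts (map int lam) \<sigma>) = {} \<longleftrightarrow>
           (\<exists>i<length lam. 2 \<le> i \<and> jt_parts (map int lam) \<sigma> ! i < 0)"
proof -
  have "sum_list (jt_parts (map int lam) \<sigma>) = int n"
    using sum_list_jt_parts[of \<sigma> "map int lam"] \<sigma> p by (simp add: is_partition_def sum_list_of_nat)
  then have "tabloids n (jt_parts (map int lam) \<sigma>) = {} \<longleftrightarrow>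
      (\<exists>i<length lam. jt_parts (map int lam) \<sigma> ! i < 0)"
    by (simp add: tabloids_eq_empty_iff)
  moreover have "jt_parts (map int lam) \<sigma> ! i \<ge> 0" if "i < 2" for i
  proof -
    have "i = 0 \<or> i = 1" using that by auto
    moreover have "0 < length lam" "1 < length lam" using l by auto
    ultimately show ?thesis using p by (auto simp: is_partition_def Suc_le_eq)
  qed
  ultimately show ?thesis by (meson not_le not_less)
qed

lemma sum_chi_eq_0:
  assumes p: "is_partition n lam" and l: "length lam \<ge> 2"
  shows "(\<Sum>w\<in>Sym n. chi n lam w) = 0"
  unfolding sum_chi
proof (rule sum_sign_eq_0_if_transpose_invariant)
  fix \<sigma> assume \<sigma>: "\<sigma> permutes {..<length lam}"
  then have \<sigma>': "\<sigma> \<circ> transpose 0 1 permutes {..<length lam}"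
    using l by (intro permutes_compose permutes_swap_id) auto
  have "jt_parts (map int lam) (\<sigma> \<circ> transpose 0 1) ! i = jt_parts (map int lam) \<sigma> ! i"
    if "2 \<le> i" "i < length lam" for i
    using that by (simp add: transpose_def)
  then show "(if tabloids n (jt_parts (map int lam) (\<sigma> \<circ> transpose 0 1)) = {} then 0 else int (fact n)) =
             (if tabloids n (jt_parts (map int lam) \<sigma>) = {} then 0 else int (fact n))"
    using tabloids_jt_parts_eq_empty_iff[OF p l \<sigma>] tabloids_jt_parts_eq_empty_iff[OF p l \<sigma>'] by auto
qed (use l in auto)

lemma chi_trivial:
  assumes w: "w \<in> Sym n"
  shows "chi n [n] w = 1"
proof -
  let ?f0 = "restrict (\<lambda>_. 0::nat) {..<n}"
  have T: "tabloids n [int n] = {?f0}"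
  proof
    show "tabloids n [int n] \<subseteq> {?f0}"
      by (auto simp: tabloids_def fun_eq_iff PiE_def Pi_def extensional_def)
    have "{j. j < n \<and> ?f0 j = 0} = {..<n}" by auto
    then show "{?f0} \<subseteq> tabloids n [int n]" by (simp add: tabloids_def)
  qed
  have "w j < n" if "j < n" for j
    using w that by (metis Sym_def lessThan_iff mem_Collect_eq permutes_in_image)
  then have "{f \<in> tabloids n [int n]. \<forall>j<n. f (w j) = f j} = {?f0}" using T by auto
  then have "young_char n [int n] w = 1" by (simp add: young_char_eq_card)
  moreover have "{\<sigma>. \<sigma> permutes {..<length [n]}} = {id}" by (auto simp: lessThan_Suc)
  ultimately show ?thesis by (simp add: chi_def)
qed

lemma fdeg_trivial: "fdeg n [n] = 1"
  unfolding fdeg_def by (rule chi_trivial) (simp add: Sym_def)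

section \<open>Characteristic polynomials of matrices with constant row sums\<close>

text \<open>Conjugating by \<open>ones_col_mat\<close> splits off the eigenvalue of the all-ones eigenvector.\<close>

definition ones_col_mat :: "nat \<Rightarrow> real mat" where
  "ones_col_mat N = mat N N (\<lambda>(i,j). if j = 0 then 1 else if i = j then 1 else 0)"

definition ones_col_inv_mat :: "nat \<Rightarrow> real mat" where
  "ones_col_inv_mat N = mat N N (\<lambda>(i,j). if j = 0 then (if i = 0 then 1 else -1) else if i = j then 1 else 0)"

lemma ones_col_mat_carrier [simp]: "ones_col_mat N \<in> carrier_mat N N"
  by (simp add: ones_col_mat_def)

lemma ones_col_inv_mat_carrier [simp]: "ones_col_inv_mat N \<in> carrier_mat N N"
  by (simp add: ones_col_inv_mat_def)

lemma index_mult_ones_col_mat: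
  assumes X: "X \<in> carrier_mat N N" and k: "k < N" and j: "j < N"
  shows "(X * ones_col_mat N) $$ (k,j) = (if j = 0 then (\<Sum>l<N. X $$ (k,l)) else X $$ (k,j))"
proof -
  have "(X * ones_col_mat N) $$ (k,j) =
      (\<Sum>l\<in>{0..<N}. X $$ (k,l) * (if j = 0 then 1 else if l = j then 1 else 0))"
    using X k j by (simp add: scalar_prod_def ones_col_mat_def)
  also have "\<dots> = (if j = 0 then (\<Sum>l<N. X $$ (k,l)) else X $$ (k,j))"
    using j by (cases "j = 0") (simp_all add: atLeast0LessThan if_distrib cong: if_cong)
  finally show ?thesis .
qed

lemma index_ones_col_inv_mat_mult:
  assumes Y: "Y \<in> carrier_mat N N" and i: "i < N" and j: "j < N"
  shows "(ones_col_inv_mat N * Y) $$ (i,j) = (if i = 0 then Y $$ (0,j) else Y $$ (i,j) - Y $$ (0,j))"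
proof -
  let ?q = "\<lambda>l. (if l = 0 then (if i = 0 then 1 else -1) else if i = l then 1 else 0) * Y $$ (l,j)"
  have "(ones_col_inv_mat N * Y) $$ (i,j) = (\<Sum>l\<in>{0..<N}. ?q l)"
    using Y i j by (simp add: scalar_prod_def ones_col_inv_mat_def)
  also have "\<dots> = ?q 0 + (\<Sum>l\<in>{0..<N} - {0}. ?q l)"
    using i by (subst sum.remove[of _ 0]) auto
  also have "(\<Sum>l\<in>{0..<N} - {0}. ?q l) = (\<Sum>l\<in>{0..<N} - {0}. if l = i then Y $$ (i,j) else 0)"
    by (rule sum.cong) auto
  also have "\<dots> = (if i = 0 then 0 else Y $$ (i,j))" using i by (simp add: sum.delta')
  finally show ?thesis by auto
qed

lemma index_conj_ones_col_mat:
  assumes X: "X \<in> carrier_mat N N" and i: "i < N" and j: "j < N"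
  shows "(ones_col_inv_mat N * X * ones_col_mat N) $$ (i,j) =
    (if i = 0 then (if j = 0 then (\<Sum>l<N. X $$ (0,l)) else X $$ (0,j))
     else (if j = 0 then (\<Sum>l<N. X $$ (i,l)) - (\<Sum>l<N. X $$ (0,l)) else X $$ (i,j) - X $$ (0,j)))"
proof -
  have "ones_col_inv_mat N * X * ones_col_mat N = ones_col_inv_mat N * (X * ones_col_mat N)"
    using X by (simp add: assoc_mult_mat[of _ N N _ N _ N])
  then show ?thesis
    using X i j by (simp add: index_ones_col_inv_mat_mult[of _ N] index_mult_ones_col_mat[OF X])
qed

lemma ones_col_inv_mat_mult: "ones_col_inv_mat N * ones_col_mat N = 1\<^sub>m N"
proof (rule eq_matI)
  fix i j assume "i < dim_row (1\<^sub>m N)" "j < dim_col (1\<^sub>m N)"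
  then show "(ones_col_inv_mat N * ones_col_mat N) $$ (i,j) = 1\<^sub>m N $$ (i,j)"
    by (simp add: index_ones_col_inv_mat_mult[of _ N] ones_col_mat_def)
qed (auto simp: ones_col_mat_def ones_col_inv_mat_def)

lemma ones_col_mat_mult_inv: "ones_col_mat N * ones_col_inv_mat N = 1\<^sub>m N"
  by (rule mat_mult_left_right_inverse[OF ones_col_inv_mat_carrier ones_col_mat_carrier ones_col_inv_mat_mult])

lemma char_poly_conj_ones_col_mat:
  assumes X: "X \<in> carrier_mat N N"
  shows "char_poly (ones_col_inv_mat N * X * ones_col_mat N) = char_poly X"
  using X ones_col_inv_mat_mult ones_col_mat_mult_inv
  by (intro char_poly_similar similar_matI) (auto intro!: mult_carrier_mat)

lemma char_poly_first_col_zero: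
  assumes X: "X \<in> carrier_mat (Suc m) (Suc m)"
    and z: "\<And>i. 0 < i \<Longrightarrow> i < Suc m \<Longrightarrow> X $$ (i,0) = 0"
  shows "char_poly X = [:- X $$ (0,0), 1:] * char_poly (mat m m (\<lambda>(i,j). X $$ (Suc i, Suc j)))"
proof -
  let ?A1 = "mat 1 1 (\<lambda>_. X $$ (0,0))" and ?A2 = "mat 1 m (\<lambda>(i,j). X $$ (0, Suc j))"
    and ?A3 = "mat m m (\<lambda>(i,j). X $$ (Suc i, Suc j))"
  have "X = four_block_mat ?A1 ?A2 (0\<^sub>m m 1) ?A3"
  proof (rule eq_matI)
    fix i j
    assume "i < dim_row (four_block_mat ?A1 ?A2 (0\<^sub>m m 1) ?A3)" "j < dim_col (four_block_mat ?A1 ?A2 (0\<^sub>m m 1) ?A3)"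
    then show "X $$ (i,j) = four_block_mat ?A1 ?A2 (0\<^sub>m m 1) ?A3 $$ (i,j)"
      using z by (cases i; cases j) auto
  qed (use X in auto)
  then have "char_poly X = char_poly ?A1 * char_poly ?A3"
    using char_poly_four_block_zeros_col[of ?A1 ?A2 m ?A3] by simp
  moreover have "char_poly ?A1 = [:- X $$ (0,0), 1:]"
    by (subst char_poly_upper_triangular[of _ 1]) (auto simp: upper_triangular_def diag_mat_def)
  ultimately show ?thesis by simp
qed

definition deflate_mat :: "nat \<Rightarrow> real mat \<Rightarrow> real mat" where
  "deflate_mat m X = mat m m (\<lambda>(i,j). X $$ (Suc i, Suc j) - X $$ (0, Suc j))"

lemma char_poly_deflate_mat:
  assumes X: "X \<in> carrier_mat (Suc m) (Suc m)"
    and rows: "\<And>i. i < Suc m \<Longrightarrow> (\<Sum>l<Suc m. X $$ (i,l)) = d"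
  shows "char_poly X = [:- d, 1:] * char_poly (deflate_mat m X)"
proof -
  let ?Y = "ones_col_inv_mat (Suc m) * X * ones_col_mat (Suc m)"
  have Y: "?Y \<in> carrier_mat (Suc m) (Suc m)"
    using X by (meson mult_carrier_mat ones_col_inv_mat_carrier ones_col_mat_carrier)
  have "char_poly X = char_poly ?Y" by (rule char_poly_conj_ones_col_mat[OF X, symmetric])
  also have "\<dots> = [:- ?Y $$ (0,0), 1:] * char_poly (mat m m (\<lambda>(i,j). ?Y $$ (Suc i, Suc j)))"
    by (rule char_poly_first_col_zero[OF Y])
      (simp add: index_conj_ones_col_mat[OF X] rows del: sum.lessThan_Suc)
  also have "mat m m (\<lambda>(i,j). ?Y $$ (Suc i, Suc j)) = deflate_mat m X"
    by (rule eq_matI) (auto simp: deflate_mat_def index_conj_ones_col_mat[OF X])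
  finally show ?thesis by (simp add: index_conj_ones_col_mat[OF X] rows del: sum.lessThan_Suc)
qed

lemma poly_char_poly_eq_det:
  fixes Y :: "real mat"
  assumes Y: "Y \<in> carrier_mat m m"
  shows "poly (char_poly Y) x = det (mat m m (\<lambda>(i,j). (if i = j then x else 0) - Y $$ (i,j)))"
proof -
  have "poly (char_poly Y) x = det (- char_matrix Y x)" by (rule char_poly_matrix[OF Y])
  also have "- char_matrix Y x = mat m m (\<lambda>(i,j). (if i = j then x else 0) - Y $$ (i,j))"
    using Y by (intro eq_matI) (auto simp: char_matrix_def)
  finally show ?thesis .
qed

lemma char_poly_scalar_minus:
  fixes X :: "real mat"
  assumes X: "X \<in> carrier_mat m m" and cX: "char_poly X = (\<Prod>e\<leftarrow>es. [:- e, 1:])"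
    and es: "length es = m"
  shows "char_poly (mat m m (\<lambda>(i,j). (if i = j then c else 0) - X $$ (i,j))) = (\<Prod>e\<leftarrow>es. [:- (c - e), 1:])"
proof -
  let ?Y = "mat m m (\<lambda>(i,j). (if i = j then c else 0) - X $$ (i,j))"
  have "poly (char_poly ?Y) x = poly (\<Prod>e\<leftarrow>es. [:- (c - e), 1:]) x" for x
  proof -
    let ?Z = "mat m m (\<lambda>(i,j). (if i = j then x - c else 0) + X $$ (i,j))"
    have Y: "poly (char_poly ?Y) x = det ?Z"
      unfolding poly_char_poly_eq_det[of ?Y m x, simplified]
      by (rule arg_cong[where f = det], rule eq_matI) auto
    moreover have "poly (char_poly X) (c - x) = det ((-1) \<cdot>\<^sub>m ?Z)"
      unfolding poly_char_poly_eq_det[OF X] by (rule arg_cong[where f = det], rule eq_matI) auto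
    moreover have "poly (char_poly X) (c - x) = (-1) ^ m * (\<Prod>e\<leftarrow>es. x - (c - e))"
      unfolding cX poly_prod_list using es by (induction es arbitrary: m) (auto simp: algebra_simps)
    ultimately have "det ?Z = (\<Prod>e\<leftarrow>es. x - (c - e))" by simp
    moreover have "poly (\<Prod>e\<leftarrow>es. [:- (c - e), 1:]) x = (\<Prod>e\<leftarrow>es. x - (c - e))"
      by (induction es) (auto simp: algebra_simps)
    ultimately show ?thesis using Y by simp
  qed
  then show ?thesis using poly_eq_poly_eq_iff by blast
qed

lemma char_poly_offdiag_minus:
  fixes A :: "real mat"
  assumes A: "A \<in> carrier_mat (Suc m) (Suc m)"
    and rows: "\<And>i. i < Suc m \<Longrightarrow> (\<Sum>l<Suc m. A $$ (i,l)) = d"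
    and es: "length es = Suc m" "es ! 0 = d"
    and cA: "char_poly A = (\<Prod>e\<leftarrow>es. [:- e, 1:])"
  shows "char_poly (mat (Suc m) (Suc m) (\<lambda>(i,j). c * (if i \<noteq> j then 1 else 0) - A $$ (i,j))) =
     [:- (c * real m - d), 1:] * (\<Prod>e\<leftarrow>tl es. [:- (- c - e), 1:])"
proof -
  let ?M = "mat (Suc m) (Suc m) (\<lambda>(i,j). c * (if i \<noteq> j then 1 else 0) - A $$ (i,j))"
  have "es = d # tl es" using es by (cases es) auto
  then have "[:- d, 1:] * char_poly (deflate_mat m A) = [:- d, 1:] * (\<Prod>e\<leftarrow>tl es. [:- e, 1:])"
    using cA char_poly_deflate_mat[OF A rows] by (metis list.simps(9) prod_list.Cons)
  moreover have "[:- d, 1:] \<noteq> 0" by simp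
  ultimately have deflate_A: "char_poly (deflate_mat m A) = (\<Prod>e\<leftarrow>tl es. [:- e, 1:])"
    using mult_left_cancel by blast
  have rows_M: "(\<Sum>l<Suc m. ?M $$ (i,l)) = c * real m - d" if "i < Suc m" for i
  proof -
    have "(\<Sum>l<Suc m. ?M $$ (i,l)) = (\<Sum>l<Suc m. c - (if l = i then c else 0) - A $$ (i,l))"
      using that by (intro sum.cong) auto
    also have "\<dots> = c * real (Suc m) - c - d" using that rows[OF that] by (simp add: sum_subtractf)
    finally show ?thesis by (simp add: algebra_simps)
  qed
  have "deflate_mat m ?M = mat m m (\<lambda>(i,j). (if i = j then - c else 0) - deflate_mat m A $$ (i,j))"
    by (rule eq_matI) (auto simp: deflate_mat_def)
  then have "char_poly (deflate_mat m ?M) = (\<Prod>e\<leftarrow>tl es. [:- (- c - e), 1:])"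
    using char_poly_scalar_minus[OF _ deflate_A] es by (simp add: deflate_mat_def)
  then show ?thesis using char_poly_deflate_mat[of ?M m, OF _ rows_M] by simp
qed

section \<open>The distance spectrum\<close>

lemma card_neighbours:
  assumes w: "w \<in> Sym n"
  shows "card {v \<in> Sym n. adj n w v} = card (Der n)"
proof -
  have wp: "w permutes {..<n}" using w by (simp add: Sym_def)
  have "{v \<in> Sym n. adj n w v} = (\<lambda>s. s \<circ> w) ` Der n"
  proof
    show "{v \<in> Sym n. adj n w v} \<subseteq> (\<lambda>s. s \<circ> w) ` Der n"
    proof
      fix v assume "v \<in> {v \<in> Sym n. adj n w v}"
      moreover have "v = (v \<circ> Hilbert_Choice.inv w) \<circ> w"
        using wp by (simp add: comp_assoc permutes_inv_o)
      ultimately show "v \<in> (\<lambda>s. s \<circ> w) ` Der n" by (auto simp: adj_def)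
    qed
    show "(\<lambda>s. s \<circ> w) ` Der n \<subseteq> {v \<in> Sym n. adj n w v}"
      using adj_comp_iff[OF w] by (auto simp: adj_def)
  qed
  moreover have "inj_on (\<lambda>s. s \<circ> w) (Der n)"
    using wp by (intro inj_onI) (metis comp_assoc comp_id permutes_inv_o(1))
  ultimately show ?thesis by (simp add: card_image)
qed

lemma adj_mat_row_sum:
  assumes e: "bij_betw e {..<fact n} (Sym n)" and i: "i < fact n"
  shows "(\<Sum>l<fact n. adj_mat n e $$ (i,l)) = real (card (Der n))"
proof -
  have "(\<Sum>l<fact n. adj_mat n e $$ (i,l)) = (\<Sum>l<fact n. if adj n (e i) (e l) then 1 else 0)"
    using i by (intro sum.cong) (auto simp: adj_mat_def)
  also have "\<dots> = real (card {l \<in> {..<fact n}. adj n (e i) (e l)})"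
    by (subst of_nat_card_filter_eq_sum) simp_all
  also have "card {l \<in> {..<fact n}. adj n (e i) (e l)} = card {v \<in> Sym n. adj n (e i) v}"
    using e by (intro bij_betw_same_card[of e]) (auto simp: bij_betw_def inj_on_def)
  also have "\<dots> = card (Der n)"
    using e i by (intro card_neighbours) (auto dest: bij_betwE)
  finally show ?thesis .
qed

lemma dist_mat_eq:
  assumes n: "n \<ge> 4" and e: "bij_betw e {..<fact n} (Sym n)"
  shows "dist_mat n e =
           mat (fact n) (fact n) (\<lambda>(i,j). 2 * (if i \<noteq> j then 1 else 0) - adj_mat n e $$ (i,j))"
    (is "_ = ?M")
proof (rule eq_matI)
  fix i j assume "i < dim_row ?M" "j < dim_col ?M"
  then have ij: "i < fact n" "j < fact n" by auto
  then have "e i \<in> Sym n" "e j \<in> Sym n" "e i = e j \<longleftrightarrow> i = j"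
    using e by (auto simp: bij_betw_def inj_on_def)
  then have "real (gdist n (e i) (e j)) =
      2 * (if i \<noteq> j then 1 else 0) - (if adj n (e i) (e j) then 1 else 0)"
    using gdist_eq[OF n, of "e i" "e j"] by (auto split: if_splits)
  then show "dist_mat n e $$ (i,j) = ?M $$ (i,j)"
    using ij by (simp add: dist_mat_def adj_mat_def)
qed (auto simp: dist_mat_def)

lemma char_poly_dist_mat:
  assumes n: "n \<ge> 4" and e: "bij_betw e {..<fact n} (Sym n)" and es: "length es = fact n"
    and es0: "es ! 0 = real (card (Der n))"
    and cA: "char_poly (adj_mat n e) = prod_list (map (\<lambda>x. [:- x, 1:]) es)"
  shows "char_poly (dist_mat n e) =
           [:- (2 * (real (fact n) - 1) - es ! 0), 1:] * prod_list (map (\<lambda>x. [:- (- 2 - x), 1:]) (tl es))"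
proof -
  obtain m where N: "fact n = Suc m" by (metis fact_gt_zero gr0_implies_Suc)
  have "adj_mat n e \<in> carrier_mat (Suc m) (Suc m)" by (simp add: adj_mat_def N)
  from char_poly_offdiag_minus[OF this, of "real (card (Der n))" es 2] show ?thesis
    using adj_mat_row_sum[OF e] es es0 cA unfolding dist_mat_eq[OF n e] N by (simp add: o_def)
qed

lemma sum_lenD_mult:
  assumes n: "n \<ge> 4"
  shows "(\<Sum>w\<in>Sym n - {id}. real (lenD n w) * c w) =
           2 * (\<Sum>w\<in>Sym n. c w) - (\<Sum>w\<in>Der n. c w) - 2 * c id"
proof -
  have D: "Der n \<subseteq> Sym n - {id}" using Der_subset_Sym id_notin_Der n by auto
  have "(\<Sum>w\<in>Sym n - {id}. real (lenD n w) * c w) =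
        (\<Sum>w\<in>Sym n - {id} - Der n. real (lenD n w) * c w) + (\<Sum>w\<in>Der n. real (lenD n w) * c w)"
    by (rule sum.subset_diff[OF D]) simp
  also have "\<dots> = (\<Sum>w\<in>Sym n - {id} - Der n. 2 * c w) + (\<Sum>w\<in>Der n. c w)"
    using lenD_Der lenD_eq_2 n by (intro arg_cong2[where f = "(+)"] sum.cong) auto
  also have "\<dots> = 2 * ((\<Sum>w\<in>Sym n. c w) - c id - (\<Sum>w\<in>Der n. c w)) + (\<Sum>w\<in>Der n. c w)"
    using sum.subset_diff[OF D, of c] sum.remove[OF finite_Sym id_in_Sym, of c]
    by (simp add: sum_distrib_left)
  finally show ?thesis by simp
qed

lemma gamma_trivial:
  assumes "n \<ge> 4"
  shows "gamma n [n] = 2 * (real (fact n) - 1) - real (card (Der n))"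
proof -
  have chi: "real_of_int (chi n [n] w) = 1" if "w \<in> Sym n" for w
    using chi_trivial[OF that] by simp
  have "(\<Sum>w\<in>Der n. real_of_int (chi n [n] w)) = real (card (Der n))"
    using chi Der_subset_Sym by (simp add: subset_iff)
  then show ?thesis
    using chi id_in_Sym unfolding gamma_def sum_lenD_mult[OF assms] fdeg_trivial by (simp add: card_Sym)
qed

lemma length_ge_2_if_partition_neq:
  assumes "is_partition n lam" "lam \<noteq> [n]" "n > 0"
  shows "length lam \<ge> 2"
proof (rule ccontr)
  assume "\<not> length lam \<ge> 2"
  then have "lam = [] \<or> (\<exists>x. lam = [x])" by (cases lam; cases "tl lam") auto
  then show False using assms by (auto simp: is_partition_def)
qed

lemma gamma_nontrivial:
  assumes n: "n \<ge> 4" and p: "is_partition n lam" and ne: "lam \<noteq> [n]"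
  shows "gamma n lam = - 2 - eta n lam"
proof -
  have "length lam \<ge> 2" using length_ge_2_if_partition_neq[OF p ne] n by simp
  then have "(\<Sum>w\<in>Sym n. real_of_int (chi n lam w)) = 0"
    using sum_chi_eq_0[OF p] by (simp flip: of_int_sum)
  moreover have "real_of_int (fdeg n lam) > 0" using fdeg_pos[OF p] by simp
  ultimately show ?thesis
    unfolding gamma_def eta_def sum_lenD_mult[OF n] by (simp add: fdeg_def field_simps)
qed

theorem proposition3p2:
  fixes n :: nat
  assumes "n \<ge> 4"
  shows "(\<forall>w\<in>Sym n. \<forall>v\<in>Sym n.
            int (gdist n w v) = 2 * (if w \<noteq> v then 1 else 0) - (if adj n w v then 1 else 0))
     \<and> (\<forall>e es. bij_betw e {..<fact n} (Sym n) \<longrightarrow> length es = fact n \<longrightarrow>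
            es ! 0 = real (card (Der n)) \<longrightarrow>
            char_poly (adj_mat n e) = prod_list (map (\<lambda>x. [:- x, 1:]) es) \<longrightarrow>
            char_poly (dist_mat n e) =
              [:- (2 * (real (fact n) - 1) - es ! 0), 1:] *
              prod_list (map (\<lambda>x. [:- (- 2 - x), 1:]) (tl es)))
     \<and> gamma n [n] = 2 * (real (fact n) - 1) - real (card (Der n))
     \<and> (\<forall>lam. is_partition n lam \<longrightarrow> lam \<noteq> [n] \<longrightarrow> gamma n lam = - 2 - eta n lam)"
  using gdist_eq char_poly_dist_mat gamma_trivial gamma_nontrivial assms by blast

end
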